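(* Suppose the cost distributions $\mathcal{C}_1,\dots,\mathcal{C}_n$ are regular, and for each $i$ let $\overline{p}_i\in\arg\max_{p'}\lambda_i(p')$, $\overline{\mathbf{p}}=(\overline{p}_1,\dots,\overline{p}_n)$. Consider the mechanism VWM-PIA: given reports $(\mathbf{c}',\mathbf{p})$, the slot is allocated so as to maximize $\sum_{i\in N}\phi_i(c_i',\overline{p}_i)\pi_i(\mathbf{c}',\mathbf{p})$ (ties broken arbitrarily); losers pay $0$; the winner $i$ pays $v_i\big(\phi_i^{-1}(\max\{\phi^{(2)}(\mathbf{c}',\overline{\mathbf{p}}),0\},\overline{p}_i),p_i\big)$, where $\phi_i^{-1}(\cdot,\overline{p}_i)$ is the inverse of $c\mapsto\phi_i(c,\overline{p}_i)$ and $\phi^{(2)}(\mathbf{c}',\overline{\mathbf{p}})$ is the second highest of $\phi_j(c_j',\overline{p}_j)$, $j\in N$. Then VWM-PIA is incentive compatible and individually rational, and its expected revenue $\mathrm{E}_{\mathbf{c}\sim\mathcal{C}}[\sum_i x_i(\mathbf{c},\overline{\mathbf{p}})]$ at the equilibrium prices $\overline{\mathbf{p}}$ is maximal among all incentive compatible and individually rational mechanisms with a price-independent allocation policy whose payments satisfy $x_i(c_i,\mathbf{c}_{-i},\mathbf{p})=v_i(c_i,p_i)\pi_i(c_i,\mathbf{c}_{-i},\mathbf{p})-\lambda_i(p_i)\int_{c_i}^{\overline{c}_i}\pi_i(z,\mathbf{c}_{-i},\mathbf{p})\,dz$ (for which $\overline{\mathbf{p}}$ is likewise the dominant-strategy price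 profile).
   Context: There are advertisers $N=\{1,\dots,n\}$ competing for a single ad slot. Advertiser $i$ has a private product cost $c_i\in[\underline{c}_i,\overline{c}_i]$; costs are independent, $c_i$ with CDF $\mathcal{C}_i$ and density $\mathcal{C}_i'$; $\mathcal{C}$ is the joint distribution. Advertiser $i$ sets a display price $p_i$, has conversion-rate function $\lambda_i:\mathbb{R}\to(0,1]$ and value $v_i(c_i,p_i)=(p_i-c_i)\lambda_i(p_i)$. Virtual value: $\phi_i(c_i,p_i)=v_i(c_i,p_i)-\lambda_i(p_i)\mathcal{C}_i(c_i)/\mathcal{C}_i'(c_i)$; $\mathcal{C}_i$ is regular if $\phi_i(c_i,p_i)$ is non-increasing in $c_i$ for every $p_i$. An auction mechanism maps cost reports and display prices $(\mathbf{c}',\mathbf{p})$ to allocations $\pi_i(\mathbf{c}',\mathbf{p})\in\{0,1\}$ (at most one winner) and payments $x_i(\mathbf{c}',\mathbf{p})$; utility $u_i=v_i(c_i,p_i)\pi_i-x_i$. IC: truthful cost reporting maximizes $u_i$ for all $i$, true costs, prices and others' reports. IR: truthful cost reporting yields $u_i\ge0$. The allocation policy is price-independent if $\pi_i(\mathbf{c}',\mathbf{p}^1)=\pi_i(\mathbf{c}',\mathbf{p}^2)$ for all $i,\mathbf{c}',\mathbf{p}^1,\mathbf{p}^2$. *)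

theory Defs
  imports "HOL-Analysis.Analysis"
begin

text \<open>Advertisers are the elements of a finite type 'n (N = UNIV).  Cost / price
  profiles are vectors in real^'n.  Allocations are real-valued (in {0,1}).\<close>

definition upd :: "real^'n \<Rightarrow> 'n \<Rightarrow> real \<Rightarrow> real^'n" where
  "upd c i z = (\<chi> j. if j = i then z else c $ j)"

definition val :: "('n \<Rightarrow> real \<Rightarrow> real) \<Rightarrow> 'n \<Rightarrow> real \<Rightarrow> real \<Rightarrow> real" where
  "val lam i c p = (p - c) * lam i p"

definition virt :: "('n \<Rightarrow> real \<Rightarrow> real) \<Rightarrow> ('n \<Rightarrow> real \<Rightarrow> real) \<Rightarrow> ('n \<Rightarrow> real \<Rightarrow> real)
    \<Rightarrow> 'n \<Rightarrow> real \<Rightarrow> real \<Rightarrow> real" where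
  "virt lam C dens i c p = val lam i c p - lam i p * C i c / dens i c"

definition regular :: "('n \<Rightarrow> real \<Rightarrow> real) \<Rightarrow> ('n \<Rightarrow> real \<Rightarrow> real) \<Rightarrow> ('n \<Rightarrow> real \<Rightarrow> real)
    \<Rightarrow> real^'n \<Rightarrow> real^'n \<Rightarrow> 'n \<Rightarrow> bool" where
  "regular lam C dens lo hi i \<longleftrightarrow>
     (\<forall>p c1 c2. lo$i \<le> c1 \<longrightarrow> c1 \<le> c2 \<longrightarrow> c2 \<le> hi$i \<longrightarrow>
        virt lam C dens i c2 p \<le> virt lam C dens i c1 p)"

definition feasible_alloc :: "('n::finite \<Rightarrow> real^'n \<Rightarrow> real^'n \<Rightarrow> real) \<Rightarrow> real^'n \<Rightarrow> real^'n \<Rightarrow> bool" where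
  "feasible_alloc \<pi> lo hi \<longleftrightarrow>
     (\<forall>c\<in>cbox lo hi. \<forall>p. (\<forall>i. \<pi> i c p \<in> {0,1}) \<and> card {i. \<pi> i c p = 1} \<le> 1)"

text \<open>utility of i with true cost ci, under reports r and prices p\<close>
definition utility :: "('n \<Rightarrow> real \<Rightarrow> real) \<Rightarrow> ('n \<Rightarrow> real^'n \<Rightarrow> real^'n \<Rightarrow> real)
    \<Rightarrow> ('n \<Rightarrow> real^'n \<Rightarrow> real^'n \<Rightarrow> real) \<Rightarrow> 'n \<Rightarrow> real \<Rightarrow> real^'n \<Rightarrow> real^'n \<Rightarrow> real" where
  "utility lam \<pi> x i ci r p = val lam i ci (p$i) * \<pi> i r p - x i r p"

definition IC :: "('n \<Rightarrow> real \<Rightarrow> real) \<Rightarrow> real^'n \<Rightarrow> real^'n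
    \<Rightarrow> ('n \<Rightarrow> real^'n \<Rightarrow> real^'n \<Rightarrow> real) \<Rightarrow> ('n \<Rightarrow> real^'n \<Rightarrow> real^'n \<Rightarrow> real) \<Rightarrow> bool" where
  "IC lam lo hi \<pi> x \<longleftrightarrow>
     (\<forall>i ci r p. ci \<in> {lo$i..hi$i} \<longrightarrow> r \<in> cbox lo hi \<longrightarrow>
        utility lam \<pi> x i ci r p \<le> utility lam \<pi> x i ci (upd r i ci) p)"

definition IR :: "('n \<Rightarrow> real \<Rightarrow> real) \<Rightarrow> real^'n \<Rightarrow> real^'n
    \<Rightarrow> ('n \<Rightarrow> real^'n \<Rightarrow> real^'n \<Rightarrow> real) \<Rightarrow> ('n \<Rightarrow> real^'n \<Rightarrow> real^'n \<Rightarrow> real) \<Rightarrow> bool" where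
  "IR lam lo hi \<pi> x \<longleftrightarrow> (\<forall>i. \<forall>c\<in>cbox lo hi. \<forall>p. utility lam \<pi> x i (c$i) c p \<ge> 0)"

definition price_independent :: "('n \<Rightarrow> real^'n \<Rightarrow> real^'n \<Rightarrow> real) \<Rightarrow> bool" where
  "price_independent \<pi> \<longleftrightarrow> (\<forall>i c p1 p2. \<pi> i c p1 = \<pi> i c p2)"

definition payment_rule :: "('n \<Rightarrow> real \<Rightarrow> real) \<Rightarrow> real^'n \<Rightarrow> real^'n
    \<Rightarrow> ('n \<Rightarrow> real^'n \<Rightarrow> real^'n \<Rightarrow> real) \<Rightarrow> ('n \<Rightarrow> real^'n \<Rightarrow> real^'n \<Rightarrow> real) \<Rightarrow> bool" where
  "payment_rule lam lo hi \<pi> x \<longleftrightarrow>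
     (\<forall>i. \<forall>c\<in>cbox lo hi. \<forall>p. x i c p =
        val lam i (c$i) (p$i) * \<pi> i c p
        - lam i (p$i) * integral {c$i..hi$i} (\<lambda>z. \<pi> i (upd c i z) p))"

definition dominant_prices :: "('n \<Rightarrow> real \<Rightarrow> real) \<Rightarrow> real^'n \<Rightarrow> real^'n
    \<Rightarrow> ('n \<Rightarrow> real^'n \<Rightarrow> real^'n \<Rightarrow> real) \<Rightarrow> ('n \<Rightarrow> real^'n \<Rightarrow> real^'n \<Rightarrow> real) \<Rightarrow> real^'n \<Rightarrow> bool" where
  "dominant_prices lam lo hi \<pi> x pbar \<longleftrightarrow>
     (\<forall>i. \<forall>c\<in>cbox lo hi. \<forall>p q.
        utility lam \<pi> x i (c$i) c (upd p i q) \<le> utility lam \<pi> x i (c$i) c (upd p i (pbar$i)))"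

definition revenue :: "('n::finite \<Rightarrow> real \<Rightarrow> real) \<Rightarrow> real^'n \<Rightarrow> real^'n
    \<Rightarrow> ('n \<Rightarrow> real^'n \<Rightarrow> real^'n \<Rightarrow> real) \<Rightarrow> real^'n \<Rightarrow> real" where
  "revenue dens lo hi x pbar =
     integral (cbox lo hi) (\<lambda>c. (\<Sum>i\<in>UNIV. x i c pbar) * (\<Prod>i\<in>UNIV. dens i (c$i)))"

text \<open>max{phi^(2)(c,pbar), 0} for the winner i = max(0, max_{j\<noteq>i} phi_j(c_j,pbar_j))\<close>
definition threshold :: "('n::finite \<Rightarrow> real \<Rightarrow> real) \<Rightarrow> ('n \<Rightarrow> real \<Rightarrow> real) \<Rightarrow> ('n \<Rightarrow> real \<Rightarrow> real)
    \<Rightarrow> real^'n \<Rightarrow> 'n \<Rightarrow> real^'n \<Rightarrow> real" where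
  "threshold lam C dens pbar i c =
     Max (insert 0 {virt lam C dens j (c$j) (pbar$j) | j. j \<noteq> i})"

text \<open>inverse of c \<mapsto> phi_i(c,pbar_i) on [lo_i,hi_i] (generalised: largest cost
  whose virtual value is at least t; equals the inverse on the range)\<close>
definition phi_inv :: "('n \<Rightarrow> real \<Rightarrow> real) \<Rightarrow> ('n \<Rightarrow> real \<Rightarrow> real) \<Rightarrow> ('n \<Rightarrow> real \<Rightarrow> real)
    \<Rightarrow> real^'n \<Rightarrow> real^'n \<Rightarrow> real^'n \<Rightarrow> 'n \<Rightarrow> real \<Rightarrow> real" where
  "phi_inv lam C dens lo hi pbar i t =
     Sup {z \<in> {lo$i..hi$i}. t \<le> virt lam C dens i z (pbar$i)}"

definition is_vwm_alloc :: "('n::finite \<Rightarrow> real \<Rightarrow> real) \<Rightarrow> ('n \<Rightarrow> real \<Rightarrow> real) \<Rightarrow> ('n \<Rightarrow> real \<Rightarrow> real)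
    \<Rightarrow> real^'n \<Rightarrow> real^'n \<Rightarrow> real^'n \<Rightarrow> ('n \<Rightarrow> real^'n \<Rightarrow> real^'n \<Rightarrow> real) \<Rightarrow> bool" where
  "is_vwm_alloc lam C dens lo hi pbar \<pi> \<longleftrightarrow>
     feasible_alloc \<pi> lo hi \<and>
     (\<forall>c\<in>cbox lo hi. \<forall>p. \<forall>a::'n \<Rightarrow> real. (\<forall>i. a i \<in> {0,1}) \<and> card {i. a i = 1} \<le> 1 \<longrightarrow>
        (\<Sum>i\<in>UNIV. virt lam C dens i (c$i) (pbar$i) * a i)
          \<le> (\<Sum>i\<in>UNIV. virt lam C dens i (c$i) (pbar$i) * \<pi> i c p))"

definition vwm_pay :: "('n::finite \<Rightarrow> real \<Rightarrow> real) \<Rightarrow> ('n \<Rightarrow> real \<Rightarrow> real) \<Rightarrow> ('n \<Rightarrow> real \<Rightarrow> real)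
    \<Rightarrow> real^'n \<Rightarrow> real^'n \<Rightarrow> real^'n \<Rightarrow> ('n \<Rightarrow> real^'n \<Rightarrow> real^'n \<Rightarrow> real)
    \<Rightarrow> 'n \<Rightarrow> real^'n \<Rightarrow> real^'n \<Rightarrow> real" where
  "vwm_pay lam C dens lo hi pbar \<pi> i c p =
     (if \<pi> i c p = 1
      then val lam i (phi_inv lam C dens lo hi pbar i (threshold lam C dens pbar i c)) (p$i)
      else 0)"

end

theory Submission
  imports Defs
begin

text \<open>
  In VWM-PIA bidder \<open>i\<close> wins exactly when her virtual value \<open>\<phi>_i(c_i, pbar_i)\<close> exceeds the
  threshold \<open>t = max(0, max_{j \<noteq> i} \<phi>_j(c_j, pbar_j))\<close>; as \<open>\<phi>_i\<close> is strictly decreasing in the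
  cost, this happens exactly for costs below \<open>\<phi>_i^{-1}(t)\<close>. Her utility is then
  \<open>(\<phi>_i^{-1}(t) - c_i) \<lambda>_i(p_i)\<close> when she wins and \<open>0\<close> otherwise. A misreport can only switch
  between these two outcomes, which gives IC and IR, and the factor \<open>\<lambda>_i(p_i)\<close> is largest at
  \<open>pbar_i\<close>.

  The same description shows that VWM-PIA obeys the payment rule
  \<open>x_i = v_i \<pi>_i - \<lambda>_i \<integral>_{c_i}^{hi_i} \<pi>_i\<close>. For every mechanism obeying it, exchanging the order of
  integration in the rent term (Myerson's argument) turns the expected revenue into the expected
  virtual welfare \<open>E[\<Sum>_i \<phi>_i(c_i, pbar_i) \<pi>_i(c)]\<close>, which VWM-PIA maximises pointwise. The
  measure-theoretic work consists in replacing the density and the allocations, which are not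
  assumed Borel measurable, by Borel versions that agree with them almost everywhere; for VWM-PIA
  this uses that ties between virtual values have measure zero, each \<open>\<phi>_i\<close> being injective.
\<close>

section \<open>Integration along one coordinate\<close>

lemma upd_nth [simp]: "upd c i z $ j = (if j = i then z else c $ j)"
  by (simp add: upd_def)

lemma upd_in_cbox: "c \<in> cbox lo hi \<Longrightarrow> z \<in> {lo$i..hi$i} \<Longrightarrow> upd c i z \<in> cbox lo hi"
  by (auto simp: mem_box_cart)

lemma upd_notin_cbox: "hi$i < z \<Longrightarrow> upd c i z \<notin> cbox lo hi"
  by (auto simp: mem_box_cart)

lemma upd_eq_add_axis: "upd c i z = c + (z - c$i) *\<^sub>R axis i 1"
  by (simp add: vec_eq_iff axis_def)

lemma borel_measurable_fst_snd [measurable]: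
  "(\<lambda>p. fst p) \<in> borel_measurable (borel :: ((real^'n::finite) \<times> real) measure)"
  "(\<lambda>p. snd p) \<in> borel_measurable (borel :: ((real^'n::finite) \<times> real) measure)"
  by (intro borel_measurable_continuous_onI continuous_intros)+

lemma borel_measurable_upd [measurable]:
  "(\<lambda>p. upd (fst p) i (snd p)) \<in> borel_measurable (borel :: ((real^'n::finite) \<times> real) measure)"
  unfolding upd_eq_add_axis by (intro borel_measurable_continuous_onI continuous_intros)

lemma borel_measurable_upd_slice [measurable]:
  "upd c i \<in> borel_measurable (borel :: real measure)"
  unfolding upd_eq_add_axis by (intro borel_measurable_continuous_onI continuous_intros)

lemma borel_measurable_fst_nth [measurable]:
  "(\<lambda>p. fst p $ i) \<in> borel_measurable (borel :: ((real^'n::finite) \<times> real) measure)"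
  by (intro borel_measurable_continuous_onI continuous_intros)

definition coord_swap :: "'n::finite \<Rightarrow> (real^'n) \<times> real \<Rightarrow> (real^'n) \<times> real" where
  "coord_swap i = (\<lambda>(c, z). (upd c i z, c$i))"

lemma borel_measurable_coord_swap [measurable]: "coord_swap i \<in> borel_measurable borel"
  unfolding coord_swap_def case_prod_unfold upd_eq_add_axis
  by (intro borel_measurable_continuous_onI continuous_intros)

lemma prod_Basis_vec: "(\<Prod>b\<in>(Basis :: (real^'n::finite) set). f b) = (\<Prod>j\<in>UNIV. f (axis j 1))"
  by (simp add: Basis_vec_def UNION_singleton_eq_range prod.reindex axis_eq_axis inj_on_def)

lemma prod_Basis_vec_inner:
  "(\<Prod>b\<in>Basis. f (axis_index b) (c \<bullet> b)) = (\<Prod>j\<in>UNIV. f j (c $ j))" for c :: "real^'n::finite"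
  by (subst prod_Basis_vec) (simp add: inner_axis)

lemma prod_Basis_vec_times_real:
  "(\<Prod>b\<in>Basis. x \<bullet> b) = (\<Prod>j\<in>UNIV. fst x $ j) * snd (x :: (real^'n::finite) \<times> real)"
  by (cases x) (simp add: Basis_prod_def prod.union_disjoint prod.reindex inj_on_def image_iff
      prod_Basis_vec inner_axis)

lemma distr_coord_swap_lborel:
  "distr lborel borel (coord_swap i) = (lborel :: ((real^'n::finite) \<times> real) measure)"
proof (rule lborel_eqI[symmetric])
  fix l u :: "(real^'n) \<times> real"
  assume le: "\<And>b. b \<in> Basis \<Longrightarrow> l \<bullet> b \<le> u \<bullet> b"
  obtain l1 l2 u1 u2 where lu: "l = (l1, l2)" "u = (u1, u2)" by (cases l, cases u)
  define l' u' where "l' = (upd l1 i l2, l1$i)" and "u' = (upd u1 i u2, u1$i)"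
  have "l1$j \<le> u1$j" for j
    using le[of "(axis j 1, 0)"] by (auto simp: lu Basis_prod_def Basis_vec_def inner_axis)
  moreover have "l2 \<le> u2"
    using le[of "(0, 1)"] by (auto simp: lu Basis_prod_def)
  ultimately have le': "\<forall>b\<in>Basis. l' \<bullet> b \<le> u' \<bullet> b"
    by (auto simp: l'_def u'_def Basis_prod_def Basis_vec_def inner_axis)
  have "coord_swap i -` box l u = box l' u'"
    by (auto simp: lu l'_def u'_def coord_swap_def box_prod mem_box_cart split: if_splits)
  then have "emeasure (distr lborel borel (coord_swap i)) (box l u) = emeasure lborel (box l' u')"
    by (simp add: emeasure_distr)
  also have "\<dots> = (\<Prod>j\<in>UNIV. upd (u1 - l1) i (u2 - l2) $ j) * (u1$i - l1$i)"
    using le' by (simp add: emeasure_lborel_box_eq prod_Basis_vec_times_real l'_def u'_def)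
      (intro arg_cong[where f=ennreal] arg_cong2[where f=times] prod.cong; simp)
  also have "\<dots> = (\<Prod>b\<in>Basis. (u - l) \<bullet> b)"
    by (simp add: prod_Basis_vec_times_real lu prod.remove[of UNIV i] mult_ac)
  finally show "emeasure (distr lborel borel (coord_swap i)) (box l u) = (\<Prod>b\<in>Basis. (u - l) \<bullet> b)" .
qed simp

lemma nn_integral_coord_swap:
  fixes H :: "(real^'n::finite) \<times> real \<Rightarrow> ennreal"
  assumes [measurable]: "H \<in> borel_measurable borel"
  shows "(\<integral>\<^sup>+c. \<integral>\<^sup>+z. H (upd c i z, c$i) \<partial>lborel \<partial>lborel) = (\<integral>\<^sup>+c. \<integral>\<^sup>+z. H (c, z) \<partial>lborel \<partial>lborel)"
proof -
  have iterated: "(\<integral>\<^sup>+c. \<integral>\<^sup>+z. G (c, z) \<partial>lborel \<partial>lborel) = (\<integral>\<^sup>+p. G p \<partial>lborel)"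
    if "G \<in> borel_measurable borel" for G :: "(real^'n) \<times> real \<Rightarrow> ennreal"
    using lborel.nn_integral_fst[of G lborel] that by (simp add: lborel_prod)
  have "(\<integral>\<^sup>+c. \<integral>\<^sup>+z. H (upd c i z, c$i) \<partial>lborel \<partial>lborel) = (\<integral>\<^sup>+p. H (coord_swap i p) \<partial>lborel)"
    using iterated[of "H \<circ> coord_swap i"] by (simp add: coord_swap_def)
  also have "\<dots> = (\<integral>\<^sup>+p. H p \<partial>distr lborel borel (coord_swap i))"
    by (simp add: nn_integral_distr)
  also have "\<dots> = (\<integral>\<^sup>+c. \<integral>\<^sup>+z. H (c, z) \<partial>lborel \<partial>lborel)"
    by (simp add: distr_coord_swap_lborel iterated)
  finally show ?thesis .
qed

lemma sets_slice: "S \<in> sets borel \<Longrightarrow> {z. upd c i z \<in> S} \<in> sets borel"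
  using measurable_sets[OF borel_measurable_upd_slice] by (simp add: vimage_def)

lemma nn_integral_indicator_slice:
  assumes "S \<in> sets borel"
  shows "(\<integral>\<^sup>+z. indicator S (upd c i z) \<partial>lborel) = emeasure lborel {z. upd c i z \<in> S}"
proof -
  have "(\<lambda>z. indicator S (upd c i z) :: ennreal) = indicator {z. upd c i z \<in> S}"
    by (auto simp: indicator_def)
  then show ?thesis using assms by (simp add: sets_slice)
qed

lemma nn_integral_emeasure_slices:
  fixes S :: "(real^'n::finite) set"
  assumes S: "S \<in> sets borel"
  shows "(\<integral>\<^sup>+c. emeasure lborel {z. upd c i z \<in> S} \<partial>lborel) = emeasure lborel S * \<infinity>"
proof -
  have ind: "(\<lambda>p :: (real^'n) \<times> real. indicator S (fst p) :: ennreal) \<in> borel_measurable borel"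
    using S by measurable
  have "(\<integral>\<^sup>+c. emeasure lborel {z. upd c i z \<in> S} \<partial>lborel)
      = (\<integral>\<^sup>+c. \<integral>\<^sup>+z. indicator S (fst (upd c i z, c$i)) \<partial>lborel \<partial>lborel)"
    using S by (simp add: nn_integral_indicator_slice)
  also have "\<dots> = (\<integral>\<^sup>+c. \<integral>\<^sup>+z. indicator S (fst (c, z::real)) \<partial>lborel \<partial>lborel)"
    by (rule nn_integral_coord_swap[OF ind])
  also have "\<dots> = emeasure lborel S * \<infinity>"
    using S by (simp add: nn_integral_multc)
  finally show ?thesis .
qed

lemma null_sets_if_slices_null:
  fixes S :: "(real^'n::finite) set"
  assumes S: "S \<in> sets borel" and slices: "\<And>c. {z. upd c i z \<in> S} \<in> null_sets lborel"
  shows "S \<in> null_sets lborel"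
  using nn_integral_emeasure_slices[OF S, of i] slices S by (simp add: null_sets_def)

lemma AE_slices_null:
  fixes S :: "(real^'n::finite) set"
  assumes S: "S \<in> null_sets lborel"
  shows "AE c in lborel. {z. upd c i z \<in> S} \<in> null_sets lborel"
proof -
  have Sb [measurable]: "S \<in> sets borel" using S by (simp add: null_sets_def)
  have "(\<lambda>p. indicator S (upd (fst p) i (snd p)) :: ennreal) \<in> borel_measurable (lborel \<Otimes>\<^sub>M lborel)"
    unfolding lborel_prod by measurable
  then have "(\<lambda>c. \<integral>\<^sup>+z. indicator S (upd c i z) \<partial>lborel) \<in> borel_measurable lborel"
    using lborel.borel_measurable_nn_integral_fst by simp
  moreover have "(\<integral>\<^sup>+c. (\<integral>\<^sup>+z. indicator S (upd c i z) \<partial>lborel) \<partial>lborel) = 0"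
    using nn_integral_emeasure_slices[OF Sb, of i] S
    by (simp add: nn_integral_indicator_slice null_sets_def)
  ultimately have "AE c in lborel. (\<integral>\<^sup>+z. indicator S (upd c i z) \<partial>lborel) = 0"
    by (simp add: nn_integral_0_iff_AE)
  then show ?thesis
    by eventually_elim (simp add: nn_integral_indicator_slice sets_slice null_sets_def)
qed

lemma AE_slice_integral_eq:
  fixes f h :: "real^'n::finite \<Rightarrow> real"
  assumes "AE c in lborel. P c \<longrightarrow> f c = h c"
  shows "AE c in lborel. \<forall>a b. (\<forall>z\<in>{a..b}. P (upd c i z)) \<longrightarrow>
           integral {a..b} (\<lambda>z. f (upd c i z)) = integral {a..b} (\<lambda>z. h (upd c i z))"
proof -
  from assms obtain N where N: "{c. \<not> (P c \<longrightarrow> f c = h c)} \<subseteq> N" "N \<in> null_sets lborel"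
    by (auto elim!: AE_E simp: null_sets_def)
  from AE_slices_null[OF N(2), of i] show ?thesis
  proof eventually_elim
    case (elim c)
    show ?case
    proof (intro allI impI)
      fix a b assume P: "\<forall>z\<in>{a..b}. P (upd c i z)"
      have "negligible {z. upd c i z \<in> N}"
        using elim by (simp add: negligible_iff_null_sets null_sets_completionI)
      then show "integral {a..b} (\<lambda>z. f (upd c i z)) = integral {a..b} (\<lambda>z. h (upd c i z))"
      proof (rule integral_spike)
        fix z assume z: "z \<in> {a..b} - {z. upd c i z \<in> N}"
        then have "P (upd c i z)" "upd c i z \<notin> N" using P by auto
        then show "h (upd c i z) = f (upd c i z)" using N(1) by auto
      qed
    qed
  qed
qed

lemma AE_vec_nth:
  assumes "AE x in lborel. P x"
  shows "AE c in (lborel :: (real^'n::finite) measure). P (c$j)"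
proof -
  from assms obtain N where N: "{x. \<not> P x} \<subseteq> N" "N \<in> null_sets lborel"
    by (auto elim!: AE_E simp: null_sets_def)
  have "{c::real^'n. c$j \<in> N} \<in> null_sets lborel"
    using N(2) measurable_sets[OF borel_measurable_nth, of N]
    by (intro null_sets_if_slices_null[of _ j]) (auto simp: vimage_def)
  then show ?thesis
    using N(1) by (intro AE_I'[of "{c. c$j \<in> N}"]) auto
qed

lemma has_integral_step:
  fixes f :: "real \<Rightarrow> real"
  assumes "a \<le> b" "m \<le> b"
    and one: "\<And>z. z \<in> {a..b} \<Longrightarrow> z < m \<Longrightarrow> f z = 1"
    and zero: "\<And>z. z \<in> {a..b} \<Longrightarrow> m < z \<Longrightarrow> f z = 0"
  shows "(f has_integral max 0 (m - a)) {a..b}"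
proof (cases "m \<le> a")
  case True
  have "(f has_integral 0) {a..b}"
    by (rule has_integral_spike[OF negligible_sing[of m], where f="\<lambda>_. 0"]) (use zero True in auto)
  then show ?thesis using True by simp
next
  case False
  have "((\<lambda>_. 1) has_integral (m - a)) {a..m}"
    using has_integral_const_real[of "1::real" a m] False by simp
  then have "(f has_integral (m - a)) {a..m}"
    by (rule has_integral_spike[OF negligible_sing[of m], rotated]) (use one assms(2) in auto)
  moreover have "(f has_integral 0) {m..b}"
    by (rule has_integral_spike[OF negligible_sing[of m], where f="\<lambda>_. 0"]) (use zero False in auto)
  ultimately have "(f has_integral (m - a) + 0) {a..b}"
    using False assms(2) by (intro has_integral_combine[of a m b]) auto
  then show ?thesis using False by simp
qed

section \<open>Allocations and payment rules\<close>

lemma single_winner_cases: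
  fixes a :: "'n::finite \<Rightarrow> real"
  assumes "\<forall>i. a i \<in> {0,1}" "card {i. a i = 1} \<le> 1"
  obtains "\<forall>j. a j = 0" | k where "a k = 1" "\<forall>j. j \<noteq> k \<longrightarrow> a j = 0"
proof (cases "\<exists>k. a k = 1")
  case True
  then obtain k where k: "a k = 1" by auto
  have "a j = 0" if "j \<noteq> k" for j
  proof (rule ccontr)
    assume "a j \<noteq> 0"
    then have "{j, k} \<subseteq> {i. a i = 1}" using k assms(1) by auto
    then have "card {j, k} \<le> card {i. a i = 1}" by (intro card_mono) auto
    then show False using that assms(2) by auto
  qed
  then show thesis using k that(2) by blast
next
  case False
  then show thesis using assms(1) that(1) by auto
qed

lemma sum_single_winner:
  fixes a :: "'n::finite \<Rightarrow> real"
  assumes "a k = 1" "\<forall>j. j \<noteq> k \<longrightarrow> a j = 0"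
  shows "(\<Sum>j\<in>UNIV. v j * a j) = v k"
proof -
  have "(\<Sum>j\<in>UNIV. v j * a j) = v k * a k"
    by (rule sum.mono_neutral_right[where S="{k}", simplified]) (use assms in auto)
  then show ?thesis using assms by simp
qed

lemma dominant_prices_if_price_independent:
  assumes pbar: "\<forall>i p'. lam i p' \<le> lam i (pbar$i)"
    and feasible: "feasible_alloc \<pi> lo hi" and indep: "price_independent \<pi>"
    and pay: "payment_rule lam lo hi \<pi> x"
  shows "dominant_prices lam lo hi \<pi> x pbar"
  unfolding dominant_prices_def
proof (intro allI ballI)
  fix i c p q assume c: "c \<in> cbox lo hi"
  have ci: "lo$i \<le> c$i" using c by (simp add: mem_box_cart)
  define I where "I = integral {c$i..hi$i} (\<lambda>z. \<pi> i (upd c i z) p)"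
  have same: "(\<lambda>z. \<pi> i (upd c i z) r) = (\<lambda>z. \<pi> i (upd c i z) p)" for r
    using indep unfolding price_independent_def by (intro ext) blast
  have utility: "utility lam \<pi> x i (c$i) c (upd p i r) = lam i r * I" for r
  proof -
    have "x i c (upd p i r) = val lam i (c$i) r * \<pi> i c (upd p i r)
        - lam i r * integral {c$i..hi$i} (\<lambda>z. \<pi> i (upd c i z) (upd p i r))"
      using pay c unfolding payment_rule_def by simp
    then show ?thesis by (simp add: utility_def I_def same[of "upd p i r"])
  qed
  have "0 \<le> \<pi> i (upd c i z) p" if "z \<in> {c$i..hi$i}" for z
  proof -
    have "upd c i z \<in> cbox lo hi" using that ci by (intro upd_in_cbox[OF c]) auto
    then have "\<pi> i (upd c i z) p \<in> {0, 1}" using feasible unfolding feasible_alloc_def by blast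
    then show ?thesis by auto
  qed
  then have "0 \<le> I"
    unfolding I_def by (cases "(\<lambda>z. \<pi> i (upd c i z) p) integrable_on {c$i..hi$i}")
      (auto intro: integral_nonneg simp: not_integrable_integral)
  then show "utility lam \<pi> x i (c$i) c (upd p i q) \<le> utility lam \<pi> x i (c$i) c (upd p i (pbar$i))"
    using pbar by (simp add: utility mult_right_mono)
qed

definition borel_alloc :: "real^'n::finite \<Rightarrow> real^'n \<Rightarrow> ('n \<Rightarrow> real^'n \<Rightarrow> real) \<Rightarrow> bool" where
  "borel_alloc lo hi g \<longleftrightarrow>
     (\<forall>i. g i \<in> borel_measurable borel \<and> (\<forall>c. 0 \<le> g i c \<and> g i c \<le> 1)
        \<and> (\<forall>c. c \<notin> cbox lo hi \<longrightarrow> g i c = 0))"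

lemma borel_allocD:
  assumes "borel_alloc lo hi g"
  shows "g i \<in> borel_measurable borel" "0 \<le> g i c" "g i c \<le> 1" "c \<notin> cbox lo hi \<Longrightarrow> g i c = 0"
  using assms unfolding borel_alloc_def by auto

lemma obtain_borel_version:
  fixes f :: "'a::euclidean_space \<Rightarrow> real"
  assumes "(\<lambda>x. f x * indicator S x) \<in> borel_measurable lebesgue"
  obtains g where "g \<in> borel_measurable borel" "AE x in lborel. x \<in> S \<longrightarrow> f x = g x"
proof -
  from completion_ex_borel_measurable_real[OF assms] obtain g
    where "g \<in> borel_measurable lborel" "AE x in lborel. f x * indicator S x = g x" by auto
  then show thesis
    by (intro that[of g]) (auto simp: measurable_lborel1 elim!: eventually_mono)
qed

lemma obtain_borel_alloc:
  assumes feasible: "feasible_alloc \<pi> lo hi"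
    and meas: "\<forall>i. (\<lambda>c. \<pi> i c p) \<in> borel_measurable (lebesgue_on (cbox lo hi))"
  obtains g where "borel_alloc lo hi g" "\<forall>i. AE c in lborel. c \<in> cbox lo hi \<longrightarrow> \<pi> i c p = g i c"
proof -
  have "\<exists>g0. g0 \<in> borel_measurable borel \<and> (AE c in lborel. c \<in> cbox lo hi \<longrightarrow> \<pi> i c p = g0 c)" for i
  proof -
    have "(\<lambda>c. \<pi> i c p * indicator (cbox lo hi) c) \<in> borel_measurable lebesgue"
      using meas borel_measurable_restrict_space_iff[of "cbox lo hi" lebesgue "\<lambda>c. \<pi> i c p"]
      by (simp add: mult.commute)
    then show ?thesis by (rule obtain_borel_version) blast
  qed
  then obtain g0 where g0: "\<forall>i. g0 i \<in> borel_measurable borel"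
    "\<forall>i. AE c in lborel. c \<in> cbox lo hi \<longrightarrow> \<pi> i c p = g0 i c"
    using choice[of "\<lambda>i g0. g0 \<in> borel_measurable borel
      \<and> (AE c in lborel. c \<in> cbox lo hi \<longrightarrow> \<pi> i c p = g0 c)"]
    by blast
  define g where "g i c = indicator (cbox lo hi) c * max 0 (min 1 (g0 i c))" for i c
  have [measurable]: "g0 i \<in> borel_measurable borel" for i using g0(1) by blast
  have "g i \<in> borel_measurable borel" for i unfolding g_def by measurable
  then have "borel_alloc lo hi g"
    unfolding borel_alloc_def by (simp add: g_def indicator_def)
  moreover have "AE c in lborel. c \<in> cbox lo hi \<longrightarrow> \<pi> i c p = g i c" for i
    using g0(2)[rule_format, of i]
  proof eventually_elim
    case (elim c)
    show ?case
    proof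
      assume c: "c \<in> cbox lo hi"
      then have "\<pi> i c p \<in> {0, 1}" using feasible unfolding feasible_alloc_def by blast
      then show "\<pi> i c p = g i c" using elim c by (auto simp: g_def)
    qed
  qed
  ultimately show thesis by (intro that) auto
qed

section \<open>The VWM-PIA mechanism\<close>

locale vwm_auction =
  fixes lo hi pbar :: "real^'n::finite"
    and C dens lam :: "'n \<Rightarrow> real \<Rightarrow> real"
    and \<pi> :: "'n \<Rightarrow> real^'n \<Rightarrow> real^'n \<Rightarrow> real"
  assumes lohi: "\<forall>i. lo$i < hi$i"
    and lam_nonneg: "\<forall>i p. 0 \<le> lam i p"
    and reg: "\<forall>i. regular lam C dens lo hi i"
    and pbar: "\<forall>i p'. lam i p' \<le> lam i (pbar$i)"
    and invertible: "\<forall>i. inj_on (\<lambda>c. virt lam C dens i c (pbar$i)) {lo$i..hi$i}"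
    and alloc: "is_vwm_alloc lam C dens lo hi pbar \<pi>"
begin

definition phi :: "'n \<Rightarrow> real \<Rightarrow> real" where
  "phi i z = virt lam C dens i z (pbar$i)"

abbreviation thr :: "'n \<Rightarrow> real^'n \<Rightarrow> real" where
  "thr \<equiv> threshold lam C dens pbar"

abbreviation inv_phi :: "'n \<Rightarrow> real \<Rightarrow> real" where
  "inv_phi \<equiv> phi_inv lam C dens lo hi pbar"

abbreviation pay :: "'n \<Rightarrow> real^'n \<Rightarrow> real^'n \<Rightarrow> real" where
  "pay \<equiv> vwm_pay lam C dens lo hi pbar \<pi>"

lemma phi_antimono: "x \<in> {lo$i..hi$i} \<Longrightarrow> y \<in> {lo$i..hi$i} \<Longrightarrow> x \<le> y \<Longrightarrow> phi i y \<le> phi i x"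
  using reg unfolding regular_def phi_def by auto

lemma phi_strict_antimono:
  assumes "x \<in> {lo$i..hi$i}" "y \<in> {lo$i..hi$i}" "x < y"
  shows "phi i y < phi i x"
proof -
  have "phi i y \<noteq> phi i x"
    using invertible assms unfolding inj_on_def phi_def by (metis less_irrefl)
  then show ?thesis using phi_antimono assms by fastforce
qed

lemma threshold_upd [simp]: "thr i (upd c i z) = thr i c"
  unfolding threshold_def by (rule arg_cong[of _ _ "\<lambda>S. Max (insert 0 S)"]) auto

lemma threshold_nonneg: "0 \<le> thr i c"
  unfolding threshold_def by (rule Max_ge) auto

lemma phi_le_threshold: "j \<noteq> i \<Longrightarrow> phi j (c$j) \<le> thr i c"
  unfolding threshold_def phi_def by (rule Max_ge) auto

lemma threshold_cases: "thr i c = 0 \<or> (\<exists>j. j \<noteq> i \<and> thr i c = phi j (c$j))"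
proof -
  have "thr i c \<in> insert 0 {phi j (c$j) |j. j \<noteq> i}"
    unfolding threshold_def phi_def by (rule Max_in) auto
  then show ?thesis by auto
qed

lemma threshold_le: "0 \<le> x \<Longrightarrow> (\<forall>j. j \<noteq> i \<longrightarrow> phi j (c$j) \<le> x) \<Longrightarrow> thr i c \<le> x"
  unfolding threshold_def phi_def by (subst Max_le_iff) auto

lemma vwm_feasible: "c \<in> cbox lo hi \<Longrightarrow> (\<forall>i. \<pi> i c p \<in> {0,1}) \<and> card {i. \<pi> i c p = 1} \<le> 1"
  using alloc unfolding is_vwm_alloc_def feasible_alloc_def by auto

lemma vwm_optimal:
  "c \<in> cbox lo hi \<Longrightarrow> \<forall>i. a i \<in> {0,1} \<Longrightarrow> card {i. a i = 1} \<le> 1 \<Longrightarrow>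
   (\<Sum>i\<in>UNIV. phi i (c$i) * a i) \<le> (\<Sum>i\<in>UNIV. phi i (c$i) * \<pi> i c p)"
  using alloc unfolding is_vwm_alloc_def phi_def by auto

lemma phi_le_vwm_welfare:
  assumes c: "c \<in> cbox lo hi"
  shows "phi j (c$j) \<le> (\<Sum>i\<in>UNIV. phi i (c$i) * \<pi> i c p)"
proof -
  have "(\<Sum>i\<in>UNIV. phi i (c$i) * (if i = j then 1 else 0)) = phi j (c$j)"
    by (rule sum_single_winner) auto
  moreover have "card {i. (if i = j then 1 else 0::real) = 1} = 1" by simp
  ultimately show ?thesis
    using vwm_optimal[OF c, of "\<lambda>i. if i = j then 1 else 0" p] by simp
qed

lemma vwm_single_winner_cases:
  assumes "c \<in> cbox lo hi"
  obtains "\<forall>j. \<pi> j c p = 0" | k where "\<pi> k c p = 1" "\<forall>j. j \<noteq> k \<longrightarrow> \<pi> j c p = 0"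
proof -
  from vwm_feasible[OF assms, of p]
  have "\<forall>j. \<pi> j c p \<in> {0,1}" "card {j. \<pi> j c p = 1} \<le> 1" by auto
  then show thesis by (rule single_winner_cases) (use that in blast)+
qed

lemma winner_threshold_le:
  assumes c: "c \<in> cbox lo hi" and wins: "\<pi> i c p = 1"
  shows "thr i c \<le> phi i (c$i)"
proof -
  have "(\<Sum>j\<in>UNIV. phi j (c$j) * \<pi> j c p) = phi i (c$i)"
  proof (cases rule: vwm_single_winner_cases[OF c, of p])
    case (2 k)
    then have "k = i" using wins by (metis zero_neq_one)
    then show ?thesis using sum_single_winner[OF 2] by simp
  qed (use wins in auto)
  moreover have "0 \<le> (\<Sum>j\<in>UNIV. phi j (c$j) * \<pi> j c p)"
    using vwm_optimal[OF c, of "\<lambda>_. 0" p] by simp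
  ultimately show ?thesis
    using phi_le_vwm_welfare[OF c, of _ p] by (intro threshold_le) auto
qed

lemma wins_if_threshold_less:
  assumes c: "c \<in> cbox lo hi" and less: "thr i c < phi i (c$i)"
  shows "\<pi> i c p = 1"
proof (rule ccontr)
  assume loses: "\<pi> i c p \<noteq> 1"
  have le: "phi i (c$i) \<le> (\<Sum>j\<in>UNIV. phi j (c$j) * \<pi> j c p)"
    by (rule phi_le_vwm_welfare[OF c])
  show False
  proof (cases rule: vwm_single_winner_cases[OF c, of p])
    case 1
    then show False using le less threshold_nonneg[of i c] by simp
  next
    case (2 k)
    then have "k \<noteq> i" using loses by auto
    then show False
      using le less phi_le_threshold[of k i c] sum_single_winner[OF 2] by simp
  qed
qed

lemma loses_if_less_threshold:
  assumes c: "c \<in> cbox lo hi" and less: "phi i (c$i) < thr i c"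
  shows "\<pi> i c p = 0"
proof -
  have "\<pi> i c p \<noteq> 1" using winner_threshold_le[OF c] less by fastforce
  then show ?thesis using vwm_feasible[OF c, of p] by auto
qed

definition superlevel :: "'n \<Rightarrow> real \<Rightarrow> real set" where
  "superlevel i t = {z \<in> {lo$i..hi$i}. t \<le> phi i z}"

lemma inv_phi_eq_Sup: "inv_phi i t = Sup (superlevel i t)"
  unfolding phi_inv_def superlevel_def phi_def ..

lemma bdd_above_superlevel: "bdd_above (superlevel i t)"
  unfolding superlevel_def by (rule bdd_aboveI[of _ "hi$i"]) auto

lemma le_inv_phi: "x \<in> {lo$i..hi$i} \<Longrightarrow> t \<le> phi i x \<Longrightarrow> x \<le> inv_phi i t"
  unfolding inv_phi_eq_Sup by (rule cSup_upper[OF _ bdd_above_superlevel]) (simp add: superlevel_def)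

lemma inv_phi_mem: "superlevel i t \<noteq> {} \<Longrightarrow> inv_phi i t \<in> {lo$i..hi$i}"
  unfolding inv_phi_eq_Sup using le_inv_phi
  by (auto simp: superlevel_def inv_phi_eq_Sup intro!: cSup_least) (fastforce intro: order_trans)

lemma less_phi_if_less_inv_phi:
  assumes ne: "superlevel i t \<noteq> {}" and x: "x \<in> {lo$i..hi$i}" and less: "x < inv_phi i t"
  shows "t < phi i x"
proof -
  obtain z where z: "z \<in> superlevel i t" "x < z"
    using less_cSupD[OF ne less[unfolded inv_phi_eq_Sup]] by auto
  then have "phi i z < phi i x" using phi_strict_antimono[OF x] by (auto simp: superlevel_def)
  then show ?thesis using z by (auto simp: superlevel_def)
qed

lemma inv_phi_phi: "x \<in> {lo$i..hi$i} \<Longrightarrow> inv_phi i (phi i x) = x"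
  using le_inv_phi[of x i "phi i x"] less_phi_if_less_inv_phi[of i "phi i x" x]
  by (fastforce simp: superlevel_def)

lemma utility_vwm:
  assumes "c \<in> cbox lo hi"
  shows "utility lam \<pi> pay i ci c p
    = (if \<pi> i c p = 1 then (inv_phi i (thr i c) - ci) * lam i (p$i) else 0)"
  using vwm_feasible[OF assms, of p] unfolding utility_def vwm_pay_def val_def
  by (auto simp: algebra_simps)

lemma utility_vwm_truthful_nonneg:
  assumes c: "c \<in> cbox lo hi"
  shows "0 \<le> utility lam \<pi> pay i (c$i) c p"
proof (cases "\<pi> i c p = 1")
  case True
  have "c$i \<in> {lo$i..hi$i}" using c by (simp add: mem_box_cart)
  then have "c$i \<le> inv_phi i (thr i c)" using le_inv_phi winner_threshold_le[OF c True] by blast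
  then show ?thesis using True lam_nonneg by (simp add: utility_vwm[OF c])
qed (simp add: utility_vwm[OF c])

lemma IC_vwm: "IC lam lo hi \<pi> pay"
  unfolding IC_def
proof (intro allI impI)
  fix i ci r p assume ci: "ci \<in> {lo$i..hi$i}" and r: "r \<in> cbox lo hi"
  let ?r = "upd r i ci"
  have r': "?r \<in> cbox lo hi" by (rule upd_in_cbox[OF r ci])
  have truthful: "0 \<le> utility lam \<pi> pay i ci ?r p"
    using utility_vwm_truthful_nonneg[OF r', of i p] by simp
  show "utility lam \<pi> pay i ci r p \<le> utility lam \<pi> pay i ci ?r p"
  proof (cases "\<pi> i r p = 1 \<and> ci < inv_phi i (thr i r)")
    case True
    have "r$i \<in> {lo$i..hi$i}" using r by (simp add: mem_box_cart)
    then have "superlevel i (thr i r) \<noteq> {}"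
      using winner_threshold_le[OF r, of i p] True by (auto simp: superlevel_def)
    then have "thr i ?r < phi i (?r$i)"
      using less_phi_if_less_inv_phi ci True by simp
    then have "\<pi> i ?r p = 1" by (rule wins_if_threshold_less[OF r'])
    then show ?thesis using True by (simp add: utility_vwm[OF r] utility_vwm[OF r'])
  next
    case False
    then have "utility lam \<pi> pay i ci r p \<le> 0"
      using lam_nonneg by (auto simp: utility_vwm[OF r] mult_nonpos_nonneg)
    then show ?thesis using truthful by linarith
  qed
qed

lemma IR_vwm: "IR lam lo hi \<pi> pay"
  unfolding IR_def using utility_vwm_truthful_nonneg by auto

lemma dominant_prices_vwm: "dominant_prices lam lo hi \<pi> pay pbar"
  unfolding dominant_prices_def
proof (intro allI ballI)
  fix i c p q assume c: "c \<in> cbox lo hi"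
  have ci: "c$i \<in> {lo$i..hi$i}" using c by (simp add: mem_box_cart)
  consider "thr i c < phi i (c$i)" | "phi i (c$i) < thr i c" | "phi i (c$i) = thr i c" by linarith
  then show "utility lam \<pi> pay i (c$i) c (upd p i q) \<le> utility lam \<pi> pay i (c$i) c (upd p i (pbar$i))"
  proof cases
    case 1
    then have "c$i \<le> inv_phi i (thr i c)" using le_inv_phi[OF ci] by simp
    then show ?thesis using pbar wins_if_threshold_less[OF c 1]
      by (simp add: utility_vwm[OF c] mult_left_mono)
  next
    case 2
    then show ?thesis using loses_if_less_threshold[OF c 2] by (simp add: utility_vwm[OF c])
  next
    case 3
    then show ?thesis using inv_phi_phi[OF ci] by (simp add: utility_vwm[OF c])
  qed
qed

lemma vwm_slice_integral:
  assumes c: "c \<in> cbox lo hi"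
  shows "integral {c$i..hi$i} (\<lambda>z. \<pi> i (upd c i z) p)
       = (if superlevel i (thr i c) = {} then 0 else max 0 (inv_phi i (thr i c) - c$i))"
proof -
  let ?t = "thr i c" and ?s = "\<lambda>z. \<pi> i (upd c i z) p"
  have ci: "c$i \<in> {lo$i..hi$i}" using c by (simp add: mem_box_cart)
  have in_cbox: "z \<in> {c$i..hi$i} \<Longrightarrow> upd c i z \<in> cbox lo hi" for z
    using ci by (intro upd_in_cbox[OF c]) auto
  show ?thesis
  proof (cases "superlevel i ?t = {}")
    case True
    have "?s z = 0" if "z \<in> {c$i..hi$i}" for z
      using True that ci loses_if_less_threshold[OF in_cbox[OF that]]
      by (force simp: superlevel_def)
    then have "integral {c$i..hi$i} ?s = integral {c$i..hi$i} (\<lambda>_. 0)"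
      by (intro integral_cong) auto
    then show ?thesis using True by simp
  next
    case False
    let ?m = "inv_phi i ?t"
    have "(?s has_integral max 0 (?m - c$i)) {c$i..hi$i}"
    proof (rule has_integral_step)
      fix z assume z: "z \<in> {c$i..hi$i}"
      then have z': "z \<in> {lo$i..hi$i}" using ci by auto
      show "?s z = 1" if "z < ?m"
        using less_phi_if_less_inv_phi[OF False z' that] wins_if_threshold_less[OF in_cbox[OF z]]
        by simp
      show "?s z = 0" if "?m < z"
        using le_inv_phi[OF z', of ?t] that loses_if_less_threshold[OF in_cbox[OF z]]
        by force
    qed (use ci inv_phi_mem[OF False] in auto)
    then show ?thesis using False by (simp add: integral_unique)
  qed
qed

lemma payment_rule_vwm: "payment_rule lam lo hi \<pi> pay"
  unfolding payment_rule_def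
proof (intro allI ballI)
  fix i c p assume c: "c \<in> cbox lo hi"
  let ?t = "thr i c"
  have ci: "c$i \<in> {lo$i..hi$i}" using c by (simp add: mem_box_cart)
  consider "thr i c < phi i (c$i)" | "phi i (c$i) < thr i c" | "phi i (c$i) = thr i c" by linarith
  then show "pay i c p = val lam i (c$i) (p$i) * \<pi> i c p
      - lam i (p$i) * integral {c$i..hi$i} (\<lambda>z. \<pi> i (upd c i z) p)"
  proof cases
    case 1
    then have "superlevel i ?t \<noteq> {}" "c$i \<le> inv_phi i ?t"
      using ci le_inv_phi[OF ci] by (auto simp: superlevel_def)
    then show ?thesis
      using wins_if_threshold_less[OF c 1]
      by (simp add: vwm_slice_integral[OF c] vwm_pay_def val_def algebra_simps)
  next
    case 2
    have "superlevel i ?t = {} \<or> inv_phi i ?t \<le> c$i"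
      using less_phi_if_less_inv_phi[OF _ ci] 2 by force
    then show ?thesis
      using loses_if_less_threshold[OF c 2] by (auto simp: vwm_slice_integral[OF c] vwm_pay_def)
  next
    case 3
    then show ?thesis
      using inv_phi_phi[OF ci] vwm_feasible[OF c, of p] ci
      by (auto simp: vwm_slice_integral[OF c] vwm_pay_def superlevel_def)
  qed
qed

text \<open>Clamping the argument to \<open>[lo$i, hi$i]\<close> keeps \<open>phi i\<close> antitone on all of \<open>\<real>\<close>,
  which makes it Borel measurable.\<close>

definition phi_clamped :: "'n \<Rightarrow> real \<Rightarrow> real" where
  "phi_clamped i x = phi i (max (lo$i) (min (hi$i) x))"

lemma phi_clamped_eq: "x \<in> {lo$i..hi$i} \<Longrightarrow> phi_clamped i x = phi i x"
  by (simp add: phi_clamped_def max_absorb2 min_absorb2)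

lemma borel_measurable_phi_clamped [measurable]: "phi_clamped i \<in> borel_measurable borel"
proof -
  have "mono (\<lambda>x. - phi_clamped i x)"
    unfolding phi_clamped_def using lohi[rule_format, of i]
    by (intro monoI) (simp add: phi_antimono)
  then have "(\<lambda>x. - (- phi_clamped i x)) \<in> borel_measurable borel"
    by (intro borel_measurable_uminus borel_measurable_mono)
  then show ?thesis by simp
qed

text \<open>The allocation \<open>\<pi>\<close> is not assumed measurable; off the null set of ties between virtual
  values it coincides with \<open>vwm_borel\<close>.\<close>

definition vwm_borel :: "'n \<Rightarrow> real^'n \<Rightarrow> real" where
  "vwm_borel i c =
     (if c \<in> cbox lo hi \<and> 0 < phi_clamped i (c$i)
         \<and> (\<forall>j\<in>UNIV. j \<noteq> i \<longrightarrow> phi_clamped j (c$j) < phi_clamped i (c$i)) then 1 else 0)"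

lemma borel_alloc_vwm_borel: "borel_alloc lo hi vwm_borel"
  unfolding borel_alloc_def
proof (intro allI conjI)
  fix i
  show "vwm_borel i \<in> borel_measurable borel" unfolding vwm_borel_def by measurable
qed (auto simp: vwm_borel_def)

lemma null_sets_tie:
  assumes [measurable]: "r \<in> borel_measurable borel" and r: "\<And>c z. r (upd c i z) = r c"
  shows "{c \<in> cbox lo hi. phi_clamped i (c$i) = r c} \<in> null_sets lborel"
proof (rule null_sets_if_slices_null[of _ i])
  show "{c \<in> cbox lo hi. phi_clamped i (c$i) = r c} \<in> sets borel" by measurable
  fix c
  have "inj_on (phi i) {lo$i..hi$i}" using invertible by (simp add: phi_def[abs_def])
  then have "finite (phi i -` {r c} \<inter> {lo$i..hi$i})" by (simp add: finite_vimage_IntI)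
  moreover have "{z. upd c i z \<in> {c \<in> cbox lo hi. phi_clamped i (c$i) = r c}}
      \<subseteq> phi i -` {r c} \<inter> {lo$i..hi$i}"
    by (auto simp: mem_box_cart phi_clamped_eq r)
  ultimately show "{z. upd c i z \<in> {c \<in> cbox lo hi. phi_clamped i (c$i) = r c}} \<in> null_sets lborel"
    by (meson finite_imp_null_set_lborel finite_subset)
qed

lemma AE_vwm_eq_vwm_borel: "AE c in lborel. c \<in> cbox lo hi \<longrightarrow> \<pi> i c p = vwm_borel i c"
proof -
  have "AE c in lborel. c \<notin> {c \<in> cbox lo hi. phi_clamped i (c$i) = 0}"
    by (rule AE_not_in[OF null_sets_tie]) auto
  moreover have "AE c in lborel. \<forall>j\<in>UNIV - {i}.
      c \<notin> {c \<in> cbox lo hi. phi_clamped i (c$i) = phi_clamped j (c$j)}"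
    by (intro AE_finite_allI AE_not_in null_sets_tie) auto
  ultimately show ?thesis
  proof eventually_elim
    case (elim c)
    show ?case
    proof
      assume c: "c \<in> cbox lo hi"
      have phi_c: "phi_clamped k (c$k) = phi k (c$k)" for k
        using c by (simp add: mem_box_cart phi_clamped_eq)
      have "phi i (c$i) \<noteq> thr i c"
        using threshold_cases[of i c] elim c by (auto simp: phi_c)
      then consider "thr i c < phi i (c$i)" | "phi i (c$i) < thr i c" by linarith
      then show "\<pi> i c p = vwm_borel i c"
      proof cases
        case 1
        then have "vwm_borel i c = 1"
          using c threshold_nonneg[of i c] phi_le_threshold[of _ i c]
          by (fastforce simp: vwm_borel_def phi_c)
        then show ?thesis using wins_if_threshold_less[OF c 1] by simp
      next
        case 2
        then have "vwm_borel i c = 0"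
          using threshold_le[of "phi i (c$i)" i c]
          by (auto simp: vwm_borel_def phi_c) (meson less_imp_le)
        then show ?thesis using loses_if_less_threshold[OF c 2] by simp
      qed
    qed
  qed
qed

end

section \<open>Myerson's revenue formula\<close>

locale cost_distributions =
  fixes lo hi :: "real^'n::finite"
    and C dens :: "'n \<Rightarrow> real \<Rightarrow> real"
  assumes lohi: "\<forall>i. lo$i < hi$i"
    and cdf_lo: "\<forall>i. C i (lo$i) = 0"
    and cdf_hi: "\<forall>i. C i (hi$i) = 1"
    and density: "\<forall>i. \<forall>c\<in>{lo$i..hi$i}.
                    (C i has_real_derivative dens i c) (at c within {lo$i..hi$i})"
    and dens_pos: "\<forall>i. \<forall>c\<in>{lo$i..hi$i}. 0 < dens i c"
begin

lemma lo_hi_mem: "lo$j \<in> {lo$j..hi$j}" "hi$j \<in> {lo$j..hi$j}"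
  using lohi[rule_format, of j] by auto

lemma dens_has_integral:
  assumes "a \<in> {lo$j..hi$j}" "b \<in> {lo$j..hi$j}" "a \<le> b"
  shows "(dens j has_integral (C j b - C j a)) {a..b}"
proof (rule fundamental_theorem_of_calculus[OF assms(3)])
  fix x assume x: "x \<in> {a..b}"
  have sub: "{a..b} \<subseteq> {lo$j..hi$j}" using assms by auto
  then have "(C j has_vector_derivative dens j x) (at x within {lo$j..hi$j})"
    using x density by (auto simp: has_real_derivative_iff_has_vector_derivative)
  then show "(C j has_vector_derivative dens j x) (at x within {a..b})"
    by (rule has_vector_derivative_within_subset[OF _ sub])
qed

lemma continuous_on_C: "continuous_on {lo$j..hi$j} (C j)"
  by (rule DERIV_continuous_on[of _ _ "dens j"]) (use density in auto)

lemma C_nonneg: "t \<in> {lo$j..hi$j} \<Longrightarrow> 0 \<le> C j t"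
  using has_integral_nonneg[OF dens_has_integral[OF lo_hi_mem(1), of t]] dens_pos cdf_lo
  by (fastforce simp: less_imp_le)

text \<open>\<open>dens j\<close> is only known to be the derivative of \<open>C j\<close>, not to be Borel measurable;
  integration against it goes through the Borel version \<open>bdens j\<close>.\<close>

lemma ex_borel_density:
  "\<exists>g. g \<in> borel_measurable borel \<and> (\<forall>x. 0 \<le> g x) \<and> (\<forall>x. x \<notin> {lo$j..hi$j} \<longrightarrow> g x = 0)
     \<and> (AE x in lborel. x \<in> {lo$j..hi$j} \<longrightarrow> dens j x = g x)"
proof -
  have "(\<lambda>x. dens j x * indicator {lo$j..hi$j} x) \<in> borel_measurable lebesgue"
    using dens_has_integral[OF lo_hi_mem] lohi
    by (intro has_integral_implies_lebesgue_measurable_real) (auto simp: less_imp_le)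
  then obtain g0 where [measurable]: "g0 \<in> borel_measurable borel"
    and ae: "AE x in lborel. x \<in> {lo$j..hi$j} \<longrightarrow> dens j x = g0 x"
    by (rule obtain_borel_version)
  define g where "g x = indicator {lo$j..hi$j} x * max 0 (g0 x)" for x
  have "g \<in> borel_measurable borel" unfolding g_def by measurable
  moreover have "AE x in lborel. x \<in> {lo$j..hi$j} \<longrightarrow> dens j x = g x"
    using ae by eventually_elim (use dens_pos in \<open>force simp: g_def\<close>)
  ultimately show ?thesis by (intro exI[of _ g]) (auto simp: g_def)
qed

definition bdens :: "'n \<Rightarrow> real \<Rightarrow> real" where
  "bdens j = (SOME g. g \<in> borel_measurable borel \<and> (\<forall>x. 0 \<le> g x) \<and> (\<forall>x. x \<notin> {lo$j..hi$j} \<longrightarrow> g x = 0)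
     \<and> (AE x in lborel. x \<in> {lo$j..hi$j} \<longrightarrow> dens j x = g x))"

lemma bdens: "bdens j \<in> borel_measurable borel" "0 \<le> bdens j x" "x \<notin> {lo$j..hi$j} \<Longrightarrow> bdens j x = 0"
  "AE x in lborel. x \<in> {lo$j..hi$j} \<longrightarrow> dens j x = bdens j x"
  using someI_ex[OF ex_borel_density[of j]] unfolding bdens_def[symmetric] by auto

lemmas borel_measurable_bdens [measurable] = bdens(1)

lemma nn_integral_bdens_atMost:
  assumes t: "t \<in> {lo$j..hi$j}"
  shows "(\<integral>\<^sup>+x. ennreal (bdens j x) * indicator {..t} x \<partial>lborel) = ennreal (C j t)"
proof -
  have "(dens j has_integral C j t) {lo$j..t}"
    using dens_has_integral[OF lo_hi_mem(1) t] t cdf_lo by auto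
  moreover have "AE x in lborel. x \<in> {lo$j..t} \<longrightarrow> bdens j x = dens j x"
    using bdens(4) by eventually_elim (use t in auto)
  ultimately have "(bdens j has_integral C j t) {lo$j..t}"
    using has_integral_AE by blast
  then have "(\<integral>\<^sup>+x. ennreal (bdens j x) * indicator {lo$j..t} x \<partial>lborel) = ennreal (C j t)"
    by (intro nn_integral_has_integral_lebesgue') (auto simp: bdens(2))
  moreover have "(\<lambda>x. ennreal (bdens j x) * indicator {..t} x)
      = (\<lambda>x. ennreal (bdens j x) * indicator {lo$j..t} x)"
    using bdens(3) by (auto simp: indicator_def fun_eq_iff)
  ultimately show ?thesis by simp
qed

lemma nn_integral_bdens: "(\<integral>\<^sup>+x. ennreal (bdens j x) \<partial>lborel) = 1"
proof -
  have "(\<integral>\<^sup>+x. ennreal (bdens j x) \<partial>lborel)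
      = (\<integral>\<^sup>+x. ennreal (bdens j x) * indicator {..hi$j} x \<partial>lborel)"
    by (intro nn_integral_cong) (auto simp: indicator_def bdens(3))
  then show ?thesis using nn_integral_bdens_atMost[OF lo_hi_mem(2)] cdf_hi by simp
qed

definition jdens :: "real^'n \<Rightarrow> real" where
  "jdens c = (\<Prod>j\<in>UNIV. bdens j (c$j))"

definition jdens_except :: "'n \<Rightarrow> real^'n \<Rightarrow> real" where
  "jdens_except i c = (\<Prod>j\<in>UNIV-{i}. bdens j (c$j))"

lemma borel_measurable_jdens [measurable]: "jdens \<in> borel_measurable borel"
  unfolding jdens_def by measurable

lemma borel_measurable_jdens_except [measurable]: "jdens_except i \<in> borel_measurable borel"
  unfolding jdens_except_def by measurable

lemma jdens_nonneg: "0 \<le> jdens c"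
  unfolding jdens_def by (intro prod_nonneg) (auto simp: bdens(2))

lemma jdens_except_nonneg: "0 \<le> jdens_except i c"
  unfolding jdens_except_def by (intro prod_nonneg) (auto simp: bdens(2))

lemma jdens_split: "jdens c = bdens i (c$i) * jdens_except i c"
  unfolding jdens_def jdens_except_def by (rule prod.remove) auto

lemma jdens_except_upd [simp]: "jdens_except i (upd c i z) = jdens_except i c"
  unfolding jdens_except_def by (rule prod.cong) auto

lemma jdens_outside: "c \<notin> cbox lo hi \<Longrightarrow> jdens c = 0"
proof -
  assume "c \<notin> cbox lo hi"
  then obtain j where "c$j \<notin> {lo$j..hi$j}" by (auto simp: mem_box_cart)
  then show "jdens c = 0" unfolding jdens_def by (intro prod_zero bexI[of _ j]) (auto simp: bdens(3))
qed

lemma nn_integral_jdens: "(\<integral>\<^sup>+c. ennreal (jdens c) \<partial>lborel) = 1"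
proof -
  have "(\<Prod>b\<in>Basis. ennreal (bdens (axis_index b) (c \<bullet> b))) = ennreal (jdens c)" for c
    using prod_Basis_vec_inner[of "\<lambda>j x. ennreal (bdens j x)" c]
    by (simp add: jdens_def prod_ennreal bdens(2))
  then have "(\<integral>\<^sup>+c. ennreal (jdens c) \<partial>lborel)
      = (\<integral>\<^sup>+c. (\<Prod>b\<in>Basis. ennreal (bdens (axis_index b) ((c :: real^'n) \<bullet> b))) \<partial>lborel)"
    by simp
  also have "\<dots> = (\<Prod>b\<in>(Basis :: (real^'n) set). \<integral>\<^sup>+x. ennreal (bdens (axis_index b) x) \<partial>lborel)"
    by (rule nn_integral_lborel_prod) auto
  also have "\<dots> = 1"
    by (simp add: prod_Basis_vec nn_integral_bdens)
  finally show ?thesis .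
qed

lemma integrable_jdens: "integrable lborel jdens"
  by (rule integrableI_nonneg) (auto simp: jdens_nonneg nn_integral_jdens)

definition cdf :: "'n \<Rightarrow> real \<Rightarrow> real" where
  "cdf j t = indicator {lo$j..hi$j} t * C j t"

lemma borel_measurable_cdf [measurable]: "cdf j \<in> borel_measurable borel"
  using borel_measurable_continuous_on_indicator[OF _ continuous_on_C, of j]
  by (simp add: cdf_def[abs_def])

lemma cdf_nonneg: "0 \<le> cdf j t"
  by (simp add: cdf_def indicator_def C_nonneg)

text \<open>\<open>tail g i c\<close> is \<open>\<integral>_{c_i}^{hi_i} g_i(z, c_{-i}) dz\<close> (see \<open>tail_eq_integral\<close>); the
  nonnegative-integral form makes it measurable in \<open>c\<close>.\<close>

definition tail_nn :: "('n \<Rightarrow> real^'n \<Rightarrow> real) \<Rightarrow> 'n \<Rightarrow> real^'n \<Rightarrow> ennreal" where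
  "tail_nn g i c = (\<integral>\<^sup>+z. ennreal (if c$i \<le> z then g i (upd c i z) else 0) \<partial>lborel)"

definition tail :: "('n \<Rightarrow> real^'n \<Rightarrow> real) \<Rightarrow> 'n \<Rightarrow> real^'n \<Rightarrow> real" where
  "tail g i c = enn2real (tail_nn g i c)"

lemma AE_dens_eq_bdens: "AE c in lborel. \<forall>j\<in>UNIV. c$j \<in> {lo$j..hi$j} \<longrightarrow> dens j (c$j) = bdens j (c$j)"
  by (intro AE_finite_allI AE_vec_nth bdens(4)) simp

lemma prod_dens_eq_jdens:
  "c \<in> cbox lo hi \<Longrightarrow> \<forall>j\<in>UNIV. c$j \<in> {lo$j..hi$j} \<longrightarrow> dens j (c$j) = bdens j (c$j)
    \<Longrightarrow> (\<Prod>j\<in>UNIV. dens j (c$j)) = jdens c"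
  unfolding jdens_def by (intro prod.cong) (auto simp: mem_box_cart)

text \<open>A Borel measurable function equal almost everywhere to
  \<open>jdens c * (\<Sum>i. virt lam C dens i (c$i) (p$i) * g i c)\<close>, which need not itself be measurable
  because \<open>dens\<close> need not be.\<close>

definition virtual_welfare_density ::
    "('n \<Rightarrow> real \<Rightarrow> real) \<Rightarrow> real^'n \<Rightarrow> ('n \<Rightarrow> real^'n \<Rightarrow> real) \<Rightarrow> real^'n \<Rightarrow> real" where
  "virtual_welfare_density lam p g c =
     (\<Sum>i\<in>UNIV. val lam i (c$i) (p$i) * g i c * jdens c
        - lam i (p$i) * (g i c * cdf i (c$i) * jdens_except i c))"

context
  fixes g assumes g: "borel_alloc lo hi g"
begin

lemma borel_measurable_alloc [measurable]: "g i \<in> borel_measurable borel"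
  using borel_allocD(1)[OF g] .

lemma borel_measurable_tail_nn [measurable]: "tail_nn g i \<in> borel_measurable borel"
proof -
  have "(\<lambda>p. ennreal (if fst p $ i \<le> snd p then g i (upd (fst p) i (snd p)) else 0))
      \<in> borel_measurable borel"
    by measurable
  then have "(\<lambda>p. ennreal (if fst p $ i \<le> snd p then g i (upd (fst p) i (snd p)) else 0))
      \<in> borel_measurable (lborel \<Otimes>\<^sub>M lborel)"
    by (simp add: lborel_prod measurable_lborel1)
  note lborel.borel_measurable_nn_integral_fst[OF this, unfolded fst_conv snd_conv]
  then show ?thesis by (simp add: tail_nn_def[abs_def] measurable_lborel1)
qed

lemma borel_measurable_tail [measurable]: "tail g i \<in> borel_measurable borel"
  unfolding tail_def by measurable

lemma tail_nn_le: "c \<in> cbox lo hi \<Longrightarrow> tail_nn g i c \<le> ennreal (hi$i - c$i)"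
proof -
  assume c: "c \<in> cbox lo hi"
  have "tail_nn g i c \<le> (\<integral>\<^sup>+z. indicator {c$i..hi$i} z \<partial>lborel)"
    unfolding tail_nn_def
  proof (rule nn_integral_mono)
    fix z
    show "ennreal (if c$i \<le> z then g i (upd c i z) else 0) \<le> indicator {c$i..hi$i} z"
      using borel_allocD(3,4)[OF g] upd_notin_cbox[of hi i z c lo] by (auto simp: indicator_def)
  qed
  then show ?thesis using c by (simp add: mem_box_cart)
qed

lemma tail_nonneg: "0 \<le> tail g i c"
  by (simp add: tail_def)

lemma tail_le: "c \<in> cbox lo hi \<Longrightarrow> tail g i c \<le> hi$i - c$i"
  unfolding tail_def using tail_nn_le by (intro enn2real_leI) (auto simp: mem_box_cart)

lemma tail_eq_integral:
  assumes c: "c \<in> cbox lo hi"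
  shows "tail g i c = integral {c$i..hi$i} (\<lambda>z. g i (upd c i z))"
proof -
  let ?f = "\<lambda>z. g i (upd c i z)"
  have "tail_nn g i c = (\<integral>\<^sup>+z\<in>{c$i..hi$i}. ennreal (?f z) \<partial>lborel)"
    unfolding tail_nn_def
  proof (rule nn_integral_cong)
    fix z
    show "ennreal (if c$i \<le> z then ?f z else 0) = ennreal (?f z) * indicator {c$i..hi$i} z"
      using borel_allocD(4)[OF g] upd_notin_cbox[of hi i z c lo] by (auto simp: indicator_def not_le)
  qed
  also have "\<dots> = ennreal (integral {c$i..hi$i} ?f)"
  proof (rule set_nn_integral_lborel_eq_integral)
    show "set_borel_measurable borel {c$i..hi$i} ?f"
      unfolding set_borel_measurable_def by measurable
    show "\<And>x. x \<in> {c$i..hi$i} \<Longrightarrow> 0 \<le> ?f x" using borel_allocD(2)[OF g] by auto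
    have "(\<integral>\<^sup>+z\<in>{c$i..hi$i}. ennreal (?f z) \<partial>lborel) \<le> ennreal (hi$i - c$i)"
      using calculation tail_nn_le[OF c, of i] by simp
    then show "(\<integral>\<^sup>+z\<in>{c$i..hi$i}. ennreal (?f z) \<partial>lborel) < \<infinity>"
      using le_less_trans[OF _ ennreal_less_top] by simp
  qed
  moreover have "0 \<le> integral {c$i..hi$i} ?f"
    using borel_allocD(2)[OF g]
    by (cases "?f integrable_on {c$i..hi$i}") (auto intro: integral_nonneg simp: not_integrable_integral)
  ultimately show ?thesis by (simp add: tail_def)
qed

definition tail_kernel :: "'n \<Rightarrow> (real^'n) \<times> real \<Rightarrow> ennreal" where
  "tail_kernel i p = ennreal (g i (fst p) * jdens_except i (fst p) * bdens i (snd p)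
      * (if snd p \<le> fst p $ i then 1 else 0))"

lemma borel_measurable_tail_kernel [measurable]: "tail_kernel i \<in> borel_measurable borel"
  unfolding tail_kernel_def by measurable

lemma nn_integral_tail_kernel_upd:
  "(\<integral>\<^sup>+z. tail_kernel i (upd c i z, c$i) \<partial>lborel) = ennreal (jdens c * tail g i c)"
proof -
  have "(\<integral>\<^sup>+z. tail_kernel i (upd c i z, c$i) \<partial>lborel)
      = (\<integral>\<^sup>+z. ennreal (jdens c) * ennreal (if c$i \<le> z then g i (upd c i z) else 0) \<partial>lborel)"
    by (intro nn_integral_cong)
      (simp add: tail_kernel_def jdens_split[of c i] ennreal_mult'[symmetric] borel_allocD(2)[OF g]
        jdens_except_nonneg bdens(2) mult_ac)
  also have "\<dots> = ennreal (jdens c) * tail_nn g i c"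
    unfolding tail_nn_def by (rule nn_integral_cmult) measurable
  also have "\<dots> = ennreal (jdens c * tail g i c)"
  proof (cases "c \<in> cbox lo hi")
    case True
    have "tail_nn g i c < top"
      using le_less_trans[OF tail_nn_le[OF True, of i] ennreal_less_top] .
    then have "tail_nn g i c = ennreal (tail g i c)"
      by (simp add: tail_def)
    then show ?thesis by (simp add: ennreal_mult jdens_nonneg tail_nonneg)
  qed (simp add: jdens_outside)
  finally show ?thesis .
qed

lemma nn_integral_tail_kernel:
  "(\<integral>\<^sup>+z. tail_kernel i (c, z) \<partial>lborel) = ennreal (g i c * cdf i (c$i) * jdens_except i c)"
proof -
  have "(\<integral>\<^sup>+z. tail_kernel i (c, z) \<partial>lborel)
      = (\<integral>\<^sup>+z. ennreal (g i c * jdens_except i c) * (ennreal (bdens i z) * indicator {..c$i} z)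
          \<partial>lborel)"
    by (intro nn_integral_cong)
      (simp add: tail_kernel_def ennreal_mult'[symmetric] borel_allocD(2)[OF g] jdens_except_nonneg
        bdens(2) mult_ac indicator_def)
  also have "\<dots> = ennreal (g i c * jdens_except i c)
      * (\<integral>\<^sup>+z. ennreal (bdens i z) * indicator {..c$i} z \<partial>lborel)"
    by (rule nn_integral_cmult) measurable
  also have "\<dots> = ennreal (g i c * cdf i (c$i) * jdens_except i c)"
  proof (cases "c \<in> cbox lo hi")
    case True
    then have ci: "c$i \<in> {lo$i..hi$i}" by (simp add: mem_box_cart)
    then show ?thesis
      by (simp add: nn_integral_bdens_atMost[OF ci] cdf_def ennreal_mult'[symmetric] C_nonneg
          borel_allocD(2)[OF g] jdens_except_nonneg)
  qed (simp add: borel_allocD(4)[OF g])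
  finally show ?thesis .
qed

lemma nn_integral_tail:
  "(\<integral>\<^sup>+c. ennreal (jdens c * tail g i c) \<partial>lborel)
     = (\<integral>\<^sup>+c. ennreal (g i c * cdf i (c$i) * jdens_except i c) \<partial>lborel)"
  using nn_integral_coord_swap[of "tail_kernel i" i]
  by (simp add: nn_integral_tail_kernel_upd nn_integral_tail_kernel)

lemma integrable_jdens_tail: "integrable lborel (\<lambda>c. jdens c * tail g i c)"
proof (rule Bochner_Integration.integrable_bound[OF integrable_mult_right[OF integrable_jdens]])
  show "(\<lambda>c. jdens c * tail g i c) \<in> borel_measurable lborel" by (simp add: measurable_lborel1)
  show "AE c in lborel. norm (jdens c * tail g i c) \<le> norm ((hi$i - lo$i) * jdens c)"
  proof (rule AE_I2)
    fix c
    show "norm (jdens c * tail g i c) \<le> norm ((hi$i - lo$i) * jdens c)"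
    proof (cases "c \<in> cbox lo hi")
      case True
      moreover have "lo$i \<le> c$i" using True by (simp add: mem_box_cart)
      ultimately have "tail g i c \<le> hi$i - lo$i" using tail_le[OF True, of i] by simp
      then show ?thesis
        using jdens_nonneg[of c] tail_nonneg[of i c]
        by (simp add: abs_mult mult_left_mono mult.commute[of _ "jdens c"])
    qed (simp add: jdens_outside)
  qed
qed

lemma integrable_cdf_term: "integrable lborel (\<lambda>c. g i c * cdf i (c$i) * jdens_except i c)"
proof (rule integrableI_nonneg)
  show "(\<lambda>c. g i c * cdf i (c$i) * jdens_except i c) \<in> borel_measurable lborel"
    by (simp add: measurable_lborel1)
  show "AE c in lborel. 0 \<le> g i c * cdf i (c$i) * jdens_except i c"
    using borel_allocD(2)[OF g] jdens_except_nonneg cdf_nonneg by simp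
  show "(\<integral>\<^sup>+c. ennreal (g i c * cdf i (c$i) * jdens_except i c) \<partial>lborel) < \<infinity>"
    using integrableD(2)[OF integrable_jdens_tail, of i] nn_integral_tail[of i]
    by (simp add: less_top)
qed

lemma integral_jdens_tail:
  "(\<integral>c. jdens c * tail g i c \<partial>lborel) = (\<integral>c. g i c * cdf i (c$i) * jdens_except i c \<partial>lborel)"
proof -
  have "0 \<le> g i c * cdf i (c$i) * jdens_except i c" for c
    using borel_allocD(2)[OF g] jdens_except_nonneg cdf_nonneg by simp
  then show ?thesis
    using nn_integral_tail[of i] jdens_nonneg tail_nonneg
    by (subst (1 2) integral_eq_nn_integral) (auto simp: measurable_lborel1)
qed

lemma integrable_value_term: "integrable lborel (\<lambda>c. val lam i (c$i) (p$i) * g i c * jdens c)"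
proof (rule Bochner_Integration.integrable_bound
    [OF integrable_mult_right[OF integrable_jdens, of "(\<bar>p$i\<bar> + \<bar>lo$i\<bar> + \<bar>hi$i\<bar>) * \<bar>lam i (p$i)\<bar>"]])
  show "(\<lambda>c. val lam i (c$i) (p$i) * g i c * jdens c) \<in> borel_measurable lborel"
    by (simp add: measurable_lborel1 val_def)
  show "AE c in lborel. norm (val lam i (c$i) (p$i) * g i c * jdens c)
      \<le> norm ((\<bar>p$i\<bar> + \<bar>lo$i\<bar> + \<bar>hi$i\<bar>) * \<bar>lam i (p$i)\<bar> * jdens c)"
  proof (rule AE_I2)
    fix c
    show "norm (val lam i (c$i) (p$i) * g i c * jdens c)
      \<le> norm ((\<bar>p$i\<bar> + \<bar>lo$i\<bar> + \<bar>hi$i\<bar>) * \<bar>lam i (p$i)\<bar> * jdens c)"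
    proof (cases "c \<in> cbox lo hi")
      case True
      let ?K = "\<bar>p$i\<bar> + \<bar>lo$i\<bar> + \<bar>hi$i\<bar>"
      have "lo$i \<le> c$i" "c$i \<le> hi$i" using True by (simp_all add: mem_box_cart)
      then have "\<bar>p$i - c$i\<bar> \<le> ?K" by arith
      moreover have "\<bar>g i c\<bar> \<le> 1" using borel_allocD(2,3)[OF g] by auto
      ultimately have "\<bar>p$i - c$i\<bar> * \<bar>g i c\<bar> \<le> ?K * 1"
        by (intro mult_mono) auto
      then have "\<bar>p$i - c$i\<bar> * \<bar>g i c\<bar> * (\<bar>lam i (p$i)\<bar> * jdens c) \<le> ?K * (\<bar>lam i (p$i)\<bar> * jdens c)"
        using jdens_nonneg[of c] by (intro mult_right_mono) auto
      then show ?thesis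
        using jdens_nonneg[of c] by (simp add: val_def abs_mult mult_ac)
    qed (simp add: jdens_outside)
  qed
qed

lemma integrable_virtual_welfare_density: "integrable lborel (virtual_welfare_density lam p g)"
  unfolding virtual_welfare_density_def
  using integrable_value_term integrable_cdf_term by auto

lemma AE_virtual_welfare_density:
  "AE c in lborel. virtual_welfare_density lam p g c
     = jdens c * (\<Sum>i\<in>UNIV. virt lam C dens i (c$i) (p$i) * g i c)"
  using AE_dens_eq_bdens
proof eventually_elim
  case (elim c)
  show ?case
  proof (cases "c \<in> cbox lo hi")
    case True
    have "jdens c * (virt lam C dens i (c$i) (p$i) * g i c)
        = val lam i (c$i) (p$i) * g i c * jdens c
          - lam i (p$i) * (g i c * cdf i (c$i) * jdens_except i c)" for i
    proof -
      have ci: "c$i \<in> {lo$i..hi$i}" using True by (simp add: mem_box_cart)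
      then have "dens i (c$i) = bdens i (c$i)" using elim by simp
      then have "jdens c = dens i (c$i) * jdens_except i c" by (simp add: jdens_split[of c i])
      moreover have "0 < dens i (c$i)" using ci dens_pos by simp
      ultimately show ?thesis using ci by (simp add: virt_def cdf_def field_simps)
    qed
    then show ?thesis by (simp add: virtual_welfare_density_def sum_distrib_left)
  qed (simp add: virtual_welfare_density_def jdens_outside borel_allocD(4)[OF g])
qed

lemma AE_revenue_density:
  assumes ae: "\<And>i. AE c in lborel. c \<in> cbox lo hi \<longrightarrow> \<pi>0 i c p = g i c"
    and pay: "payment_rule lam lo hi \<pi>0 x0"
  shows "AE c in lborel. c \<in> cbox lo hi \<longrightarrow> (\<Sum>i\<in>UNIV. x0 i c p) * (\<Prod>i\<in>UNIV. dens i (c$i))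
    = (\<Sum>i\<in>UNIV. val lam i (c$i) (p$i) * g i c * jdens c - lam i (p$i) * (jdens c * tail g i c))"
proof -
  have "AE c in lborel. \<forall>i\<in>UNIV. c \<in> cbox lo hi \<longrightarrow> \<pi>0 i c p = g i c"
    by (intro AE_finite_allI ae) simp
  moreover have "AE c in lborel. \<forall>i\<in>UNIV. \<forall>a b. (\<forall>z\<in>{a..b}. upd c i z \<in> cbox lo hi) \<longrightarrow>
      integral {a..b} (\<lambda>z. \<pi>0 i (upd c i z) p) = integral {a..b} (\<lambda>z. g i (upd c i z))"
    by (intro AE_finite_allI AE_slice_integral_eq ae) simp
  ultimately show ?thesis using AE_dens_eq_bdens
  proof eventually_elim
    case (elim c)
    show ?case
    proof
      assume c: "c \<in> cbox lo hi"
      have x0: "x0 i c p = val lam i (c$i) (p$i) * g i c - lam i (p$i) * tail g i c" for i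
      proof -
        have "lo$i \<le> c$i" using c by (simp add: mem_box_cart)
        then have "\<forall>z\<in>{c$i..hi$i}. upd c i z \<in> cbox lo hi"
          by (auto intro: upd_in_cbox[OF c])
        then show ?thesis
          using pay c elim(1,2) unfolding payment_rule_def by (simp add: tail_eq_integral[OF c])
      qed
      show "(\<Sum>i\<in>UNIV. x0 i c p) * (\<Prod>i\<in>UNIV. dens i (c$i))
        = (\<Sum>i\<in>UNIV. val lam i (c$i) (p$i) * g i c * jdens c - lam i (p$i) * (jdens c * tail g i c))"
        unfolding x0 prod_dens_eq_jdens[OF c elim(3)]
        by (simp add: sum_distrib_left algebra_simps)
    qed
  qed
qed

lemma revenue_eq_integral_virtual_welfare_density:
  assumes ae: "\<And>i. AE c in lborel. c \<in> cbox lo hi \<longrightarrow> \<pi>0 i c p = g i c"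
    and pay: "payment_rule lam lo hi \<pi>0 x0"
  shows "revenue dens lo hi x0 p = (\<integral>c. virtual_welfare_density lam p g c \<partial>lborel)"
proof -
  define A where "A i = (\<integral>c. val lam i (c$i) (p$i) * g i c * jdens c \<partial>lborel)" for i
  define T where "T i = (\<integral>c. jdens c * tail g i c \<partial>lborel)" for i
  define R where "R = (\<Sum>i\<in>UNIV. A i - lam i (p$i) * T i)"
  define U where "U c = (\<Sum>i\<in>UNIV. val lam i (c$i) (p$i) * g i c * jdens c
    - lam i (p$i) * (jdens c * tail g i c))" for c
  have value_term:
    "has_bochner_integral lborel (\<lambda>c. val lam i (c$i) (p$i) * g i c * jdens c) (A i)" for i
    unfolding A_def by (rule has_bochner_integral_integrable[OF integrable_value_term])
  have "has_bochner_integral lborel U R"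
    unfolding U_def R_def T_def
    using value_term has_bochner_integral_integrable[OF integrable_jdens_tail]
    by (intro has_bochner_integral_sum has_bochner_integral_diff has_bochner_integral_mult_right) auto
  then have "(U has_integral R) UNIV"
    using has_integral_integral_lborel[of U] by (simp add: has_bochner_integral_iff)
  moreover have "(\<lambda>c. if c \<in> cbox lo hi then U c else 0) = U"
    by (auto simp: U_def jdens_outside)
  ultimately have "((\<lambda>c. if c \<in> cbox lo hi then U c else 0) has_integral R) UNIV"
    by simp
  then have U_integral: "(U has_integral R) (cbox lo hi)"
    by (simp only: has_integral_restrict_UNIV)
  have "has_bochner_integral lborel (virtual_welfare_density lam p g) R"
    unfolding virtual_welfare_density_def[abs_def] R_def T_def integral_jdens_tail
    using value_term has_bochner_integral_integrable[OF integrable_cdf_term]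
    by (intro has_bochner_integral_sum has_bochner_integral_diff has_bochner_integral_mult_right) auto
  then have VW_integral: "(\<integral>c. virtual_welfare_density lam p g c \<partial>lborel) = R"
    by (rule has_bochner_integral_integral_eq)
  have "AE c in lborel. c \<in> cbox lo hi \<longrightarrow> (\<Sum>i\<in>UNIV. x0 i c p) * (\<Prod>i\<in>UNIV. dens i (c$i)) = U c"
    unfolding U_def by (rule AE_revenue_density[OF ae pay])
  from has_integral_AE[OF this] U_integral
  have "((\<lambda>c. (\<Sum>i\<in>UNIV. x0 i c p) * (\<Prod>i\<in>UNIV. dens i (c$i))) has_integral R) (cbox lo hi)"
    by simp
  then show ?thesis
    unfolding revenue_def VW_integral by (rule integral_unique)
qed

end

end

section \<open>Revenue optimality of VWM-PIA\<close>

locale vwm_revenue = cost_distributions lo hi C dens + vwm_auction lo hi pbar C dens lam \<pi>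
  for lo hi pbar :: "real^'n::finite" and C dens lam :: "'n \<Rightarrow> real \<Rightarrow> real"
    and \<pi> :: "'n \<Rightarrow> real^'n \<Rightarrow> real^'n \<Rightarrow> real"
begin

lemma AE_virtual_welfare_density_le_vwm:
  assumes g: "borel_alloc lo hi g" and feasible: "feasible_alloc \<pi>' lo hi"
    and ae: "\<forall>i. AE c in lborel. c \<in> cbox lo hi \<longrightarrow> \<pi>' i c pbar = g i c"
  shows "AE c in lborel.
    virtual_welfare_density lam pbar g c \<le> virtual_welfare_density lam pbar vwm_borel c"
proof -
  have "AE c in lborel. \<forall>i\<in>UNIV. c \<in> cbox lo hi \<longrightarrow> \<pi>' i c pbar = g i c"
    using ae by (intro AE_finite_allI) auto
  moreover have "AE c in lborel. \<forall>i\<in>UNIV. c \<in> cbox lo hi \<longrightarrow> \<pi> i c pbar = vwm_borel i c"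
    by (intro AE_finite_allI AE_vwm_eq_vwm_borel) simp
  ultimately show ?thesis
    using AE_virtual_welfare_density[OF g, where lam=lam and p=pbar]
      AE_virtual_welfare_density[OF borel_alloc_vwm_borel, where lam=lam and p=pbar]
  proof eventually_elim
    case (elim c)
    show ?case
    proof (cases "c \<in> cbox lo hi")
      case True
      have "\<forall>i. \<pi>' i c pbar \<in> {0,1}" "card {i. \<pi>' i c pbar = 1} \<le> 1"
        using feasible True unfolding feasible_alloc_def by auto
      then have "(\<Sum>i\<in>UNIV. phi i (c$i) * \<pi>' i c pbar) \<le> (\<Sum>i\<in>UNIV. phi i (c$i) * \<pi> i c pbar)"
        by (rule vwm_optimal[OF True])
      then have "(\<Sum>i\<in>UNIV. phi i (c$i) * g i c) \<le> (\<Sum>i\<in>UNIV. phi i (c$i) * vwm_borel i c)"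
        using elim(1,2) True by simp
      then show ?thesis
        using elim(3,4) jdens_nonneg[of c] by (simp add: phi_def mult_left_mono)
    qed (use elim(3,4) in \<open>simp add: jdens_outside\<close>)
  qed
qed

lemma revenue_le_vwm:
  assumes feasible: "feasible_alloc \<pi>' lo hi" and pay': "payment_rule lam lo hi \<pi>' x'"
    and meas: "\<forall>i. (\<lambda>c. \<pi>' i c pbar) \<in> borel_measurable (lebesgue_on (cbox lo hi))"
  shows "revenue dens lo hi x' pbar \<le> revenue dens lo hi pay pbar"
proof -
  obtain g where g: "borel_alloc lo hi g"
    and ae: "\<forall>i. AE c in lborel. c \<in> cbox lo hi \<longrightarrow> \<pi>' i c pbar = g i c"
    using obtain_borel_alloc[OF feasible meas] .
  note gv = borel_alloc_vwm_borel
  have "AE c in lborel.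
      virtual_welfare_density lam pbar g c \<le> virtual_welfare_density lam pbar vwm_borel c"
    by (rule AE_virtual_welfare_density_le_vwm[OF g feasible ae])
  then have "(\<integral>c. virtual_welfare_density lam pbar g c \<partial>lborel)
      \<le> (\<integral>c. virtual_welfare_density lam pbar vwm_borel c \<partial>lborel)"
    by (intro integral_mono_AE integrable_virtual_welfare_density g gv)
  moreover have "revenue dens lo hi x' pbar = (\<integral>c. virtual_welfare_density lam pbar g c \<partial>lborel)"
    using ae pay' by (intro revenue_eq_integral_virtual_welfare_density[OF g]) auto
  moreover have "revenue dens lo hi pay pbar
      = (\<integral>c. virtual_welfare_density lam pbar vwm_borel c \<partial>lborel)"
    by (rule revenue_eq_integral_virtual_welfare_density[OF gv AE_vwm_eq_vwm_borel payment_rule_vwm])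
  ultimately show ?thesis by simp
qed

end

theorem theorem5:
  fixes lo hi pbar :: "real^'n::finite"
    and C dens lam :: "'n \<Rightarrow> real \<Rightarrow> real"
    and \<pi> :: "'n \<Rightarrow> real^'n \<Rightarrow> real^'n \<Rightarrow> real"
  assumes lohi: "\<forall>i. lo$i < hi$i"
    and cdf_lo: "\<forall>i. C i (lo$i) = 0"
    and cdf_hi: "\<forall>i. C i (hi$i) = 1"
    and density: "\<forall>i. \<forall>c\<in>{lo$i..hi$i}.
                    (C i has_real_derivative dens i c) (at c within {lo$i..hi$i})"
    and dens_pos: "\<forall>i. \<forall>c\<in>{lo$i..hi$i}. 0 < dens i c"
    and lam: "\<forall>i p. 0 < lam i p \<and> lam i p \<le> 1"
    and reg: "\<forall>i. regular lam C dens lo hi i"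
    and pbar: "\<forall>i p'. lam i p' \<le> lam i (pbar$i)"
    and invertible: "\<forall>i. inj_on (\<lambda>c. virt lam C dens i c (pbar$i)) {lo$i..hi$i}"
    and alloc: "is_vwm_alloc lam C dens lo hi pbar \<pi>"
  shows "IC lam lo hi \<pi> (vwm_pay lam C dens lo hi pbar \<pi>)
       \<and> IR lam lo hi \<pi> (vwm_pay lam C dens lo hi pbar \<pi>)
       \<and> dominant_prices lam lo hi \<pi> (vwm_pay lam C dens lo hi pbar \<pi>) pbar
       \<and> (\<forall>\<pi>' x'. feasible_alloc \<pi>' lo hi \<and> IC lam lo hi \<pi>' x' \<and> IR lam lo hi \<pi>' x'
              \<and> price_independent \<pi>' \<and> payment_rule lam lo hi \<pi>' x'
              \<and> (\<forall>i. (\<lambda>c. \<pi>' i c pbar) \<in> borel_measurable (lebesgue_on (cbox lo hi)))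
            \<longrightarrow> dominant_prices lam lo hi \<pi>' x' pbar
              \<and> revenue dens lo hi x' pbar
                  \<le> revenue dens lo hi (vwm_pay lam C dens lo hi pbar \<pi>) pbar)"
proof -
  interpret vwm_revenue lo hi pbar C dens lam \<pi>
    using assms by unfold_locales (auto simp: less_imp_le)
  show ?thesis
    using IC_vwm IR_vwm dominant_prices_vwm revenue_le_vwm
      dominant_prices_if_price_independent[OF pbar] by blast
qed

end
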